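(* Let $\Gamma$ be a discrete group, $V$ a left $\Gamma$-set and $\mathcal G=\Gamma\ltimes V$ the transformation groupoid. Let $E$ be a left $\Gamma$-set with a $1$-cocycle $\varphi\colon\Gamma\times E\to\Gamma$, $(h,e)\mapsto h|_e$ (i.e. $(gh)|_e=g|_{h\cdot e}\cdot h|_e$ for all $g,h\in\Gamma$, $e\in E$), and maps $r,s\colon E\to V$ with $s(g\cdot e)=(g|_e)\cdot s(e)$ and $r(g\cdot e)=g\cdot r(e)$ for all $g\in\Gamma$, $e\in E$. Then $X=E\times\Gamma$ with the discrete topology, anchors $r(e,g)=r(e)$, $s(e,g)=g^{-1}\cdot s(e)$, right $\Gamma$-action $(e,g)\cdot g_2=(e,gg_2)$ and left $\Gamma$-action $h\cdot(e,g)=(h\cdot e,h|_e\cdot g)$ is a groupoid correspondence $\mathcal G\leftarrow\mathcal G$. Every groupoid correspondence $\mathcal G\leftarrow\mathcal G$ is isomorphic to one of this form, where $(E,r,s)$ is unique up to isomorphism and $\varphi$ is unique up to the action of the group of maps $\psi\colon E\to\Gamma$ given by $\varphi^\psi(h,e)=\psi(h\cdot e)^{-1}\varphi(h,e)\psi(e)$. The correspondence $X$ is proper if and only if $r\colon E\to V$ is finite-to-one, and tight if and only if $r\colon E\to V$ is bijective.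
   Context: $V$ carries the discrete topology; $\Gamma\ltimes V$ has arrows $(g,v)$ with $s(g,v)=v$, $r(g,v)=gv$. An action of $\Gamma\ltimes V$ on a space is the same as a $\Gamma$-action together with a $\Gamma$-equivariant anchor map to $V$ (for right actions: $s(x\gamma)=\gamma^{-1}s(x)$). A groupoid correspondence $X\colon\mathcal H\leftarrow\mathcal G$ between étale groupoids is a space with commuting continuous left $\mathcal H$-action (anchor $r$) and right $\mathcal G$-action (anchor $s$), such that $s$ is a local homeomorphism and the right action is free and proper (the map $(x,g)\mapsto(xg,x)$ is injective and proper). Isomorphism of correspondences means a biequivariant homeomorphism. $X$ is proper if $r_*\colon X/\mathcal G\to\mathcal H^0$ is proper, and tight if $r_*$ is a homeomorphism. *)

theory Defs
  imports "HOL-Analysis.Analysis"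
begin

text \<open>The discrete group Gamma is a type 'g of class group_add
(written additively: g h is g + h, the inverse of g is - g, the unit is 0;
commutativity is NOT assumed). V is the type 'v with the discrete topology,
Gamma acting on the left by act. A correspondence over Gamma x| V is given by
a topological space X with a left Gamma-action la, a right Gamma-action ra
(ra x g is x.g), the left anchor rX and the right anchor sX.\<close>

definition left_action :: "('g::group_add \<Rightarrow> 'a \<Rightarrow> 'a) \<Rightarrow> 'a set \<Rightarrow> bool" where
  "left_action a A \<longleftrightarrow>
     (\<forall>g. \<forall>x\<in>A. a g x \<in> A) \<and> (\<forall>x\<in>A. a 0 x = x) \<and>
     (\<forall>g h. \<forall>x\<in>A. a (g + h) x = a g (a h x))"

definition right_action :: "('a \<Rightarrow> 'g::group_add \<Rightarrow> 'a) \<Rightarrow> 'a set \<Rightarrow> bool" where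
  "right_action a A \<longleftrightarrow>
     (\<forall>g. \<forall>x\<in>A. a x g \<in> A) \<and> (\<forall>x\<in>A. a x 0 = x) \<and>
     (\<forall>g h. \<forall>x\<in>A. a x (g + h) = a (a x g) h)"

definition local_homeomorphism_map :: "'a topology \<Rightarrow> 'b topology \<Rightarrow> ('a \<Rightarrow> 'b) \<Rightarrow> bool" where
  "local_homeomorphism_map X Y f \<longleftrightarrow>
     f ` topspace X \<subseteq> topspace Y \<and>
     (\<forall>x\<in>topspace X. \<exists>U. openin X U \<and> x \<in> U \<and> openin Y (f ` U) \<and>
        homeomorphic_map (subtopology X U) (subtopology Y (f ` U)) f)"

text \<open>An action of the
transformation groupoid is a Gamma-action with an equivariant anchor; for the
right action s(x.g) = g^-1 s(x). Continuity of the action maps amounts to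
continuity of each translation since Gamma x| V is discrete. The right action is
free and proper: (x,g) |-> (x.g, x) from X x Gamma (= X x_{s,r} (Gamma x| V))
to X x X is injective and proper.\<close>

definition is_corr ::
  "('g::group_add \<Rightarrow> 'v \<Rightarrow> 'v) \<Rightarrow> 'x topology \<Rightarrow> ('g \<Rightarrow> 'x \<Rightarrow> 'x) \<Rightarrow> ('x \<Rightarrow> 'g \<Rightarrow> 'x)
     \<Rightarrow> ('x \<Rightarrow> 'v) \<Rightarrow> ('x \<Rightarrow> 'v) \<Rightarrow> bool" where
  "is_corr act X la ra rX sX \<longleftrightarrow>
     left_action la (topspace X) \<and> right_action ra (topspace X) \<and>
     (\<forall>h. continuous_map X X (la h)) \<and> (\<forall>g. continuous_map X X (\<lambda>x. ra x g)) \<and>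
     continuous_map X (discrete_topology UNIV) rX \<and>
     continuous_map X (discrete_topology UNIV) sX \<and>
     (\<forall>h. \<forall>x\<in>topspace X. rX (la h x) = act h (rX x)) \<and>
     (\<forall>g. \<forall>x\<in>topspace X. sX (ra x g) = act (- g) (sX x)) \<and>
     (\<forall>g h. \<forall>x\<in>topspace X. la h (ra x g) = ra (la h x) g) \<and>
     (\<forall>g. \<forall>x\<in>topspace X. rX (ra x g) = rX x) \<and>
     (\<forall>h. \<forall>x\<in>topspace X. sX (la h x) = sX x) \<and>
     local_homeomorphism_map X (discrete_topology UNIV) sX \<and>
     inj_on (\<lambda>(x, g). (ra x g, x)) (topspace X \<times> UNIV) \<and>
     proper_map (prod_topology X (discrete_topology (UNIV :: 'g set)))
                (prod_topology X X) (\<lambda>(x, g). (ra x g, x))"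

definition corr_iso ::
  "'x topology \<Rightarrow> ('g \<Rightarrow> 'x \<Rightarrow> 'x) \<Rightarrow> ('x \<Rightarrow> 'g \<Rightarrow> 'x) \<Rightarrow> ('x \<Rightarrow> 'v) \<Rightarrow> ('x \<Rightarrow> 'v) \<Rightarrow>
   'y topology \<Rightarrow> ('g \<Rightarrow> 'y \<Rightarrow> 'y) \<Rightarrow> ('y \<Rightarrow> 'g \<Rightarrow> 'y) \<Rightarrow> ('y \<Rightarrow> 'v) \<Rightarrow> ('y \<Rightarrow> 'v) \<Rightarrow>
   ('x \<Rightarrow> 'y) \<Rightarrow> bool" where
  "corr_iso X la ra rX sX Y lb rb rY sY f \<longleftrightarrow>
     homeomorphic_map X Y f \<and>
     (\<forall>h. \<forall>x\<in>topspace X. f (la h x) = lb h (f x)) \<and>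
     (\<forall>g. \<forall>x\<in>topspace X. f (ra x g) = rb (f x) g) \<and>
     (\<forall>x\<in>topspace X. rY (f x) = rX x) \<and>
     (\<forall>x\<in>topspace X. sY (f x) = sX x)"

definition orbits :: "'x topology \<Rightarrow> ('x \<Rightarrow> 'g \<Rightarrow> 'x) \<Rightarrow> 'x set set" where
  "orbits X ra = (\<lambda>x. range (ra x)) ` topspace X"

definition orbit_space :: "'x topology \<Rightarrow> ('x \<Rightarrow> 'g \<Rightarrow> 'x) \<Rightarrow> 'x set topology" where
  "orbit_space X ra = topology (\<lambda>U. U \<subseteq> orbits X ra \<and> openin X (\<Union>U))"

definition r_star :: "('x \<Rightarrow> 'v) \<Rightarrow> 'x set \<Rightarrow> 'v" where
  "r_star rX Orb = rX (SOME x. x \<in> Orb)"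

definition proper_corr :: "'x topology \<Rightarrow> ('x \<Rightarrow> 'g \<Rightarrow> 'x) \<Rightarrow> ('x \<Rightarrow> 'v) \<Rightarrow> bool" where
  "proper_corr X ra rX \<longleftrightarrow>
     proper_map (orbit_space X ra) (discrete_topology UNIV) (r_star rX)"

definition tight_corr :: "'x topology \<Rightarrow> ('x \<Rightarrow> 'g \<Rightarrow> 'x) \<Rightarrow> ('x \<Rightarrow> 'v) \<Rightarrow> bool" where
  "tight_corr X ra rX \<longleftrightarrow>
     homeomorphic_map (orbit_space X ra) (discrete_topology UNIV) (r_star rX)"

text \<open>Cocycle data (E, Eact, phi, r, s), where phi h e stands for h|_e.\<close>

definition cocycle_data ::
  "('g::group_add \<Rightarrow> 'v \<Rightarrow> 'v) \<Rightarrow> 'e set \<Rightarrow> ('g \<Rightarrow> 'e \<Rightarrow> 'e) \<Rightarrow> ('g \<Rightarrow> 'e \<Rightarrow> 'g)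
     \<Rightarrow> ('e \<Rightarrow> 'v) \<Rightarrow> ('e \<Rightarrow> 'v) \<Rightarrow> bool" where
  "cocycle_data act E Eact phi rE sE \<longleftrightarrow>
     left_action Eact E \<and>
     (\<forall>g h. \<forall>e\<in>E. phi (g + h) e = phi g (Eact h e) + phi h e) \<and>
     (\<forall>g. \<forall>e\<in>E. sE (Eact g e) = act (phi g e) (sE e)) \<and>
     (\<forall>g. \<forall>e\<in>E. rE (Eact g e) = act g (rE e))"

definition cX_top :: "'e set \<Rightarrow> ('e \<times> 'g) topology" where
  "cX_top E = discrete_topology (E \<times> UNIV)"

definition cX_la :: "('g \<Rightarrow> 'e \<Rightarrow> 'e) \<Rightarrow> ('g \<Rightarrow> 'e \<Rightarrow> 'g::group_add) \<Rightarrow> 'g \<Rightarrow> 'e \<times> 'g \<Rightarrow> 'e \<times> 'g" where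
  "cX_la Eact phi h p = (Eact h (fst p), phi h (fst p) + snd p)"

definition cX_ra :: "'e \<times> 'g \<Rightarrow> 'g \<Rightarrow> 'e \<times> 'g::group_add" where
  "cX_ra p g2 = (fst p, snd p + g2)"

definition cX_r :: "('e \<Rightarrow> 'v) \<Rightarrow> 'e \<times> 'g \<Rightarrow> 'v" where
  "cX_r rE p = rE (fst p)"

definition cX_s :: "('g::group_add \<Rightarrow> 'v \<Rightarrow> 'v) \<Rightarrow> ('e \<Rightarrow> 'v) \<Rightarrow> 'e \<times> 'g \<Rightarrow> 'v" where
  "cX_s act sE p = act (- snd p) (sE (fst p))"

end

theory Submission
  imports Defs
begin

text \<open>Since the anchor \<open>s\<close> is a local homeomorphism into the discrete space \<open>V\<close>, every
  correspondence is discrete, and since the right \<open>\<Gamma>\<close>-action is free, choosing one point in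
  each orbit gives a set \<open>E \<subseteq> X\<close> with \<open>E \<times> \<Gamma> \<cong> X\<close>, \<open>(e, g) \<mapsto> e \<cdot> g\<close>. Writing
  the left translate of \<open>(e, 0)\<close> by \<open>h\<close> in these coordinates as \<open>(h \<cdot> e, h|\<^sub>e)\<close> defines the action on \<open>E\<close> and the cocycle;
  the cocycle identity is the associativity of the left action on \<open>E \<times> \<Gamma>\<close>. An isomorphism
  \<open>E \<times> \<Gamma> \<rightarrow> E' \<times> \<Gamma>\<close> commutes with right translations, so it is \<open>(e, g) \<mapsto> (\<tau> e, k e + g)\<close>,
  and comparing left actions shows that the cocycles differ by \<open>\<psi> = - k\<close>. Finally \<open>X/\<Gamma>\<close>
  is the discrete set \<open>E\<close> with \<open>r\<^sub>* = r\<close>, which gives the criteria for properness and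
  tightness.\<close>

lemma homeomorphic_map_discrete_topology_iff:
  "homeomorphic_map (discrete_topology A) (discrete_topology B) f \<longleftrightarrow> bij_betw f A B"
proof
  assume "homeomorphic_map (discrete_topology A) (discrete_topology B) f"
  then show "bij_betw f A B"
    by (metis bij_betw_def homeomorphic_imp_injective_map homeomorphic_imp_surjective_map
        topspace_discrete_topology)
next
  assume "bij_betw f A B"
  then show "homeomorphic_map (discrete_topology A) (discrete_topology B) f"
    by (intro bijective_open_imp_homeomorphic_map)
      (auto simp: open_map_into_discrete_topology bij_betw_def)
qed

lemma proper_map_discrete_topology_iff:
  "proper_map (discrete_topology A) (discrete_topology B) f \<longleftrightarrow>
     f ` A \<subseteq> B \<and> (\<forall>y\<in>B. finite {x\<in>A. f x = y})"
  by (auto simp: proper_map_def closed_map_into_discrete_topology compactin_discrete_topology)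

lemma local_homeomorphism_map_from_discrete_topology:
  assumes "f ` A \<subseteq> B"
  shows "local_homeomorphism_map (discrete_topology A) (discrete_topology B) f"
  unfolding local_homeomorphism_map_def
proof (intro conjI ballI)
  fix x assume "x \<in> topspace (discrete_topology A)"
  with assms show "\<exists>U. openin (discrete_topology A) U \<and> x \<in> U \<and>
      openin (discrete_topology B) (f ` U) \<and>
      homeomorphic_map (subtopology (discrete_topology A) U)
        (subtopology (discrete_topology B) (f ` U)) f"
    by (intro exI[of _ "{x}"])
      (auto simp: homeomorphic_map_discrete_topology_iff bij_betw_def Int_absorb1)
qed (use assms in auto)

text \<open>A local homeomorphism into a discrete space is injective on an open neighbourhood
  \<open>U\<close> of each point \<open>x\<close>, so \<open>{x} = U \<inter> s\<^sup>-\<^sup>1{s x}\<close> is open.\<close>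

lemma local_homeomorphism_map_into_discrete_imp_discrete:
  assumes "local_homeomorphism_map X (discrete_topology UNIV) s"
  shows "X = discrete_topology (topspace X)"
proof -
  have "openin X {x}" if x: "x \<in> topspace X" for x
  proof -
    obtain U where U: "openin X U" "x \<in> U"
      and hom: "homeomorphic_map (subtopology X U) (subtopology (discrete_topology UNIV) (s ` U)) s"
      using assms x unfolding local_homeomorphism_map_def by blast
    have topU: "topspace (subtopology X U) = U"
      using U openin_subset by auto
    have "inj_on s U"
      using homeomorphic_imp_injective_map[OF hom] topU by simp
    then have singleton: "{y \<in> topspace (subtopology X U). s y \<in> {s x}} = {x}"
      using U topU by (auto dest: inj_onD)
    have "continuous_map (subtopology X U) (discrete_topology (s ` U)) s"
      using homeomorphic_imp_continuous_map[OF hom] by simp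
    moreover have "openin (discrete_topology (s ` U)) {s x}"
      using U by simp
    ultimately have "openin (subtopology X U) {y \<in> topspace (subtopology X U). s y \<in> {s x}}"
      by (rule openin_continuous_map_preimage)
    then have "openin (subtopology X U) {x}"
      by (simp only: singleton)
    then show ?thesis
      using U openin_trans_full by blast
  qed
  then show ?thesis
    by (metis discrete_topology_unique)
qed

lemma left_action_pullback:
  assumes "left_action a B" and "bij_betw p A B"
    and closed: "\<And>h x. x \<in> A \<Longrightarrow> a' h x \<in> A"
    and intertwine: "\<And>h x. x \<in> A \<Longrightarrow> p (a' h x) = a h (p x)"
  shows "left_action a' A"
proof -
  have pB: "p x \<in> B" if "x \<in> A" for x
    using assms(2) that by (rule bij_betw_apply)
  have inj: "x = y" if "x \<in> A" "y \<in> A" "p x = p y" for x y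
    using assms(2) that unfolding bij_betw_def inj_on_def by blast
  show ?thesis
    unfolding left_action_def
  proof (intro conjI allI ballI)
    fix g h x assume x: "x \<in> A"
    show "a' g x \<in> A" using closed x .
    show "a' 0 x = x"
      using assms(1) pB x by (intro inj) (auto simp: closed intertwine left_action_def)
    have "p (a' (g + h) x) = a g (a h (p x))"
      using assms(1) pB x by (simp add: intertwine left_action_def)
    also have "\<dots> = p (a' g (a' h x))"
      using x by (simp add: closed intertwine)
    finally show "a' (g + h) x = a' g (a' h x)"
      using x by (intro inj) (auto simp: closed)
  qed
qed

lemma left_action_cX_la_iff:
  "left_action (cX_la Eact phi) (E \<times> UNIV) \<longleftrightarrow>
     left_action Eact E \<and> (\<forall>g h. \<forall>e\<in>E. phi (g + h) e = phi g (Eact h e) + phi h e)"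
  (is "?lhs \<longleftrightarrow> ?rhs")
proof
  assume ?lhs
  then have "cX_la Eact phi g (e, 0) \<in> E \<times> UNIV"
    and "cX_la Eact phi 0 (e, 0) = (e, 0)"
    and "cX_la Eact phi (g + h) (e, 0) = cX_la Eact phi g (cX_la Eact phi h (e, 0))"
    if "e \<in> E" for e g h
    using that unfolding left_action_def by auto
  then show ?rhs
    unfolding left_action_def by (simp add: cX_la_def)
next
  assume ?rhs
  have "phi 0 e = 0" if "e \<in> E" for e
  proof -
    have "phi 0 e + phi 0 e = phi 0 e + 0"
      using \<open>?rhs\<close> that unfolding left_action_def by (metis add_0_right)
    then show ?thesis
      by (simp only: add_left_cancel)
  qed
  with \<open>?rhs\<close> show ?lhs
    unfolding left_action_def cX_la_def by (auto simp: add.assoc)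
qed

lemma is_corr_cX:
  fixes act :: "'g::group_add \<Rightarrow> 'v \<Rightarrow> 'v"
  assumes act_add: "\<And>g h v. act (g + h) v = act g (act h v)"
    and cd: "cocycle_data act E Eact phi rE sE"
  shows "is_corr act (cX_top E) (cX_la Eact phi) cX_ra (cX_r rE) (cX_s act sE)"
proof -
  have la: "left_action (cX_la Eact phi) (E \<times> UNIV)"
    using cd by (simp add: cocycle_data_def left_action_cX_la_iff)
  then have la_in: "\<And>h x. x \<in> E \<times> UNIV \<Longrightarrow> cX_la Eact phi h x \<in> E \<times> UNIV"
    unfolding left_action_def by blast
  have sE: "\<And>g e. e \<in> E \<Longrightarrow> sE (Eact g e) = act (phi g e) (sE e)"
    and rE: "\<And>g e. e \<in> E \<Longrightarrow> rE (Eact g e) = act g (rE e)"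
    using cd unfolding cocycle_data_def by auto
  have s_ra: "cX_s act sE (cX_ra x g) = act (- g) (cX_s act sE x)" for x g
    by (simp only: cX_s_def cX_ra_def fst_conv snd_conv minus_add act_add)
  have s_la: "cX_s act sE (cX_la Eact phi h (e, k)) = cX_s act sE (e, k)" if "e \<in> E" for e h k
    using that by (simp add: cX_s_def cX_la_def sE minus_add add.assoc flip: act_add)
  have ra_inj: "inj_on (\<lambda>(x, g). (cX_ra x g, x)) ((E \<times> UNIV) \<times> UNIV)"
    by (auto simp: inj_on_def cX_ra_def)
  have "proper_map (prod_topology (cX_top E) (discrete_topology UNIV))
      (prod_topology (cX_top E) (cX_top E)) (\<lambda>(x, g). (cX_ra x g, x))"
    unfolding cX_top_def prod_topology_discrete_topology[symmetric] proper_map_discrete_topology_iff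
    using finite_vimage_IntI[OF finite.insertI[OF finite.emptyI] ra_inj]
    by (auto simp: cX_ra_def vimage_def Int_def conj_commute)
  moreover have "right_action cX_ra (E \<times> UNIV)"
    by (auto simp: right_action_def cX_ra_def add.assoc)
  moreover have "local_homeomorphism_map (cX_top E) (discrete_topology UNIV) (cX_s act sE)"
    unfolding cX_top_def by (simp add: local_homeomorphism_map_from_discrete_topology)
  ultimately show ?thesis
    unfolding is_corr_def using la la_in ra_inj s_ra s_la
    by (auto simp: cX_top_def cX_la_def cX_ra_def cX_r_def rE add.assoc)
qed

lemma right_action_range_eq:
  assumes "right_action ra T" and "x \<in> T"
  shows "range (ra (ra x c)) = range (ra x)"
proof
  have ra_add: "ra x (g + h) = ra (ra x g) h" for g h
    using assms unfolding right_action_def by blast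
  show "range (ra (ra x c)) \<subseteq> range (ra x)"
    by (auto simp flip: ra_add)
  have "ra x g = ra (ra x c) (- c + g)" for g
    by (simp flip: ra_add add: add.assoc[symmetric])
  then show "range (ra x) \<subseteq> range (ra (ra x c))"
    by blast
qed

lemma free_right_action_transversal:
  fixes ra :: "'x \<Rightarrow> 'g::group_add \<Rightarrow> 'x"
  assumes act: "right_action ra T"
    and free: "\<And>x g g'. x \<in> T \<Longrightarrow> ra x g = ra x g' \<Longrightarrow> g = g'"
  obtains E where "E \<subseteq> T" and "bij_betw (\<lambda>(e, g). ra e g) (E \<times> UNIV) T"
proof -
  have ra_in: "\<And>x g. x \<in> T \<Longrightarrow> ra x g \<in> T"
    and ra0: "\<And>x. x \<in> T \<Longrightarrow> ra x 0 = x"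
    and ra_add: "\<And>x g h. x \<in> T \<Longrightarrow> ra x (g + h) = ra (ra x g) h"
    using act unfolding right_action_def by auto
  define rep where "rep x = (SOME y. y \<in> range (ra x))" for x
  have rep_in_orbit: "rep x \<in> range (ra x)" for x
    unfolding rep_def by (rule someI_ex) blast
  have rep_ra: "rep (ra x c) = rep x" if "x \<in> T" for x c
    unfolding rep_def using right_action_range_eq[OF act that] by simp
  define E where "E = rep ` T"
  have rep_E: "rep e = e" if e: "e \<in> E" for e
  proof -
    obtain x d where "x \<in> T" "e = rep x" "rep x = ra x d"
      using e rep_in_orbit unfolding E_def by blast
    then show ?thesis
      by (metis rep_ra)
  qed
  have E_T: "E \<subseteq> T"
    using rep_in_orbit ra_in unfolding E_def by (metis image_iff image_subsetI)
  have "inj_on (\<lambda>(e, g). ra e g) (E \<times> UNIV)"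
  proof (rule inj_onI, clarify)
    fix e g e' g' assume e: "e \<in> E" "e' \<in> E" and eq: "ra e g = ra e' g'"
    have "e = e'"
      using rep_ra[of e g] rep_ra[of e' g'] rep_E e eq E_T by auto
    with free[of e g g'] e eq E_T show "e = e' \<and> g = g'"
      by auto
  qed
  moreover have "x \<in> (\<lambda>(e, g). ra e g) ` (E \<times> UNIV)" if x: "x \<in> T" for x
  proof -
    obtain d where d: "rep x = ra x d"
      using rep_in_orbit by blast
    have "ra (rep x) (- d) = x"
      using x by (simp add: d ra0 flip: ra_add)
    moreover have "rep x \<in> E"
      using x unfolding E_def by blast
    ultimately show ?thesis
      by (intro image_eqI[of _ _ "(rep x, - d)"]) auto
  qed
  ultimately have "bij_betw (\<lambda>(e, g). ra e g) (E \<times> UNIV) T"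
    using ra_in E_T by (auto simp: bij_betw_def)
  with E_T show ?thesis
    using that by blast
qed

lemma corr_iso_inverse:
  assumes iso: "corr_iso X la ra rX sX Y lb rb rY sY f"
    and la_in: "\<And>h x. x \<in> topspace X \<Longrightarrow> la h x \<in> topspace X"
    and ra_in: "\<And>g x. x \<in> topspace X \<Longrightarrow> ra x g \<in> topspace X"
  shows "\<exists>f'. corr_iso Y lb rb rY sY X la ra rX sX f'"
proof -
  obtain f' where "homeomorphic_maps X Y f f'"
    using iso unfolding corr_iso_def homeomorphic_map_maps by blast
  then have hom': "homeomorphic_map Y X f'"
    and f'_f: "\<And>x. x \<in> topspace X \<Longrightarrow> f' (f x) = x"
    and f_f': "\<And>y. y \<in> topspace Y \<Longrightarrow> f (f' y) = y"
    and f'_in: "\<And>y. y \<in> topspace Y \<Longrightarrow> f' y \<in> topspace X"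
    unfolding homeomorphic_maps_map by (auto dest: homeomorphic_imp_surjective_map)
  have lb_f: "\<And>h x. x \<in> topspace X \<Longrightarrow> lb h (f x) = f (la h x)"
    and rb_f: "\<And>g x. x \<in> topspace X \<Longrightarrow> rb (f x) g = f (ra x g)"
    and rY_f: "\<And>x. x \<in> topspace X \<Longrightarrow> rY (f x) = rX x"
    and sY_f: "\<And>x. x \<in> topspace X \<Longrightarrow> sY (f x) = sX x"
    using iso unfolding corr_iso_def by auto
  have "corr_iso Y lb rb rY sY X la ra rX sX f'"
    unfolding corr_iso_def
  proof (intro conjI allI ballI hom')
    fix g h y assume y: "y \<in> topspace Y"
    then have y_eq: "y = f (f' y)" and x: "f' y \<in> topspace X"
      by (simp_all add: f_f' f'_in)
    show "f' (lb h y) = la h (f' y)"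
      using x by (subst y_eq) (simp add: lb_f f'_f la_in)
    show "f' (rb y g) = ra (f' y) g"
      using x by (subst y_eq) (simp add: rb_f f'_f ra_in)
    show "rX (f' y) = rY y"
      using x by (subst (2) y_eq) (simp add: rY_f)
    show "sX (f' y) = sY y"
      using x by (subst (2) y_eq) (simp add: sY_f)
  qed
  then show ?thesis by blast
qed

lemma commuting_left_action_coordinates:
  fixes ra :: "'x \<Rightarrow> 'g::group_add \<Rightarrow> 'x"
  assumes la_act: "left_action la T" and ra_act: "right_action ra T"
    and la_ra: "\<And>g h x. x \<in> T \<Longrightarrow> la h (ra x g) = ra (la h x) g"
    and E_T: "E \<subseteq> T" and bij: "bij_betw (\<lambda>(e, g). ra e g) (E \<times> UNIV) T"
  obtains Eact phi where "left_action (cX_la Eact phi) (E \<times> UNIV)"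
    and "\<And>h e. e \<in> E \<Longrightarrow> la h e = ra (Eact h e) (phi h e)"
    and "\<And>h x. x \<in> E \<times> UNIV \<Longrightarrow>
           (\<lambda>(e, g). ra e g) (cX_la Eact phi h x) = la h ((\<lambda>(e, g). ra e g) x)"
proof -
  have la_in: "\<And>h x. x \<in> T \<Longrightarrow> la h x \<in> T"
    using la_act unfolding left_action_def by blast
  have ra_add: "\<And>g h x. x \<in> T \<Longrightarrow> ra x (g + h) = ra (ra x g) h"
    using ra_act unfolding right_action_def by auto
  define coord where "coord = inv_into (E \<times> UNIV) (\<lambda>(e, g). ra e g)"
  have coord: "coord x \<in> E \<times> UNIV" "x = (\<lambda>(e, g). ra e g) (coord x)" if "x \<in> T" for x
    using that bij bij_betw_inv_into_right[OF bij] unfolding coord_def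
    by (auto intro: inv_into_into simp: bij_betw_def)
  define Eact where "Eact h e = fst (coord (la h e))" for h e
  define phi where "phi h e = snd (coord (la h e))" for h e
  have Eact_in: "Eact h e \<in> E" and la_eq: "la h e = ra (Eact h e) (phi h e)" if "e \<in> E" for h e
  proof -
    have "la h e \<in> T"
      using that E_T la_in by blast
    then show "Eact h e \<in> E" "la h e = ra (Eact h e) (phi h e)"
      using coord unfolding Eact_def phi_def by (auto simp: mem_Times_iff case_prod_beta)
  qed
  have intertwine: "(\<lambda>(e, g). ra e g) (cX_la Eact phi h x) = la h ((\<lambda>(e, g). ra e g) x)"
    if xE: "x \<in> E \<times> UNIV" for h x
  proof -
    obtain e g where x: "x = (e, g)" and e: "e \<in> E" "e \<in> T"
      using xE E_T by auto
    have "la h (ra e g) = ra (ra (Eact h e) (phi h e)) g"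
      using e by (simp add: la_ra la_eq)
    also have "\<dots> = ra (Eact h e) (phi h e + g)"
      using e E_T Eact_in by (simp add: ra_add subset_iff)
    finally show ?thesis
      by (simp add: x cX_la_def)
  qed
  have "left_action (cX_la Eact phi) (E \<times> UNIV)"
    using la_act bij intertwine Eact_in
    by (intro left_action_pullback[where p = "\<lambda>(e, g). ra e g"]) (auto simp: cX_la_def)
  with la_eq intertwine show ?thesis
    using that by blast
qed

lemma is_corr_iso_cX:
  fixes act :: "'g::group_add \<Rightarrow> 'v \<Rightarrow> 'v" and X :: "'x topology"
  assumes act0: "\<And>v. act 0 v = v"
    and act_add: "\<And>g h v. act (g + h) v = act g (act h v)"
    and corr: "is_corr act X la ra rX sX"
  shows "\<exists>(E :: 'x set) Eact phi rE sE f. cocycle_data act E Eact phi rE sE \<and>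
           corr_iso X la ra rX sX (cX_top E) (cX_la Eact phi) cX_ra (cX_r rE) (cX_s act sE) f"
proof -
  define T where "T = topspace X"
  have la_act: "left_action la T" and ra_act: "right_action ra T"
    and rX_la: "\<And>h x. x \<in> T \<Longrightarrow> rX (la h x) = act h (rX x)"
    and sX_ra: "\<And>g x. x \<in> T \<Longrightarrow> sX (ra x g) = act (- g) (sX x)"
    and la_ra: "\<And>g h x. x \<in> T \<Longrightarrow> la h (ra x g) = ra (la h x) g"
    and rX_ra: "\<And>g x. x \<in> T \<Longrightarrow> rX (ra x g) = rX x"
    and sX_la: "\<And>h x. x \<in> T \<Longrightarrow> sX (la h x) = sX x"
    and loc_homeo: "local_homeomorphism_map X (discrete_topology UNIV) sX"
    and ra_inj: "inj_on (\<lambda>(x, g). (ra x g, x)) (T \<times> UNIV)"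
    using corr unfolding is_corr_def T_def by auto
  have ra_add: "\<And>g h x. x \<in> T \<Longrightarrow> ra x (g + h) = ra (ra x g) h"
    using ra_act unfolding right_action_def by auto
  have "\<And>x g g'. x \<in> T \<Longrightarrow> ra x g = ra x g' \<Longrightarrow> g = g'"
    using ra_inj unfolding inj_on_def by auto
  then obtain E where E_T: "E \<subseteq> T"
    and bij: "bij_betw (\<lambda>(e, g). ra e g) (E \<times> UNIV) T"
    using free_right_action_transversal[OF ra_act] by blast
  obtain Eact phi where la_cX: "left_action (cX_la Eact phi) (E \<times> UNIV)"
    and la_eq: "\<And>h e. e \<in> E \<Longrightarrow> la h e = ra (Eact h e) (phi h e)"
    and intertwine: "\<And>h x. x \<in> E \<times> UNIV \<Longrightarrow>
           (\<lambda>(e, g). ra e g) (cX_la Eact phi h x) = la h ((\<lambda>(e, g). ra e g) x)"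
    using commuting_left_action_coordinates[OF la_act ra_act la_ra E_T bij] by blast
  have "left_action Eact E"
    using la_cX left_action_cX_la_iff by blast
  then have Eact_in: "\<And>h e. e \<in> E \<Longrightarrow> Eact h e \<in> E"
    unfolding left_action_def by blast
  have "sX (Eact h e) = act (phi h e) (sX e)" if "e \<in> E" for h e
  proof -
    have "sX e = act (- phi h e) (sX (Eact h e))"
      using that E_T Eact_in by (metis la_eq sX_la sX_ra subsetD)
    then show ?thesis
      by (simp flip: act_add add: act0)
  qed
  moreover have "rX (Eact h e) = act h (rX e)" if "e \<in> E" for h e
    using that E_T Eact_in by (metis la_eq rX_la rX_ra subsetD)
  ultimately have cd: "cocycle_data act E Eact phi rX sX"
    using la_cX unfolding cocycle_data_def left_action_cX_la_iff by blast
  have X_discrete: "X = discrete_topology T"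
    using local_homeomorphism_map_into_discrete_imp_discrete[OF loc_homeo] by (simp add: T_def)
  have "corr_iso (cX_top E) (cX_la Eact phi) cX_ra (cX_r rX) (cX_s act sX)
      X la ra rX sX (\<lambda>(e, g). ra e g)"
    unfolding corr_iso_def
    using bij intertwine E_T
    by (auto simp: X_discrete cX_top_def homeomorphic_map_discrete_topology_iff
        cX_ra_def cX_r_def cX_s_def ra_add rX_ra sX_ra)
  then have "\<exists>f. corr_iso X la ra rX sX (cX_top E) (cX_la Eact phi) cX_ra (cX_r rX) (cX_s act sX) f"
    using Eact_in by (intro corr_iso_inverse) (auto simp: cX_top_def cX_la_def cX_ra_def)
  with cd show ?thesis
    by blast
qed

lemma cX_ra_equivariant_bij_betw:
  fixes f :: "'e \<times> 'g::group_add \<Rightarrow> 'f \<times> 'g"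
  assumes bij: "bij_betw f (E \<times> UNIV) (E' \<times> UNIV)"
    and equivariant: "\<And>x g. x \<in> E \<times> UNIV \<Longrightarrow> f (cX_ra x g) = cX_ra (f x) g"
  obtains \<tau> k where "bij_betw \<tau> E E'" and "\<And>e g. e \<in> E \<Longrightarrow> f (e, g) = (\<tau> e, k e + g)"
proof -
  define \<tau> where "\<tau> e = fst (f (e, 0))" for e
  define k where "k e = snd (f (e, 0))" for e
  have f_eq: "f (e, g) = (\<tau> e, k e + g)" if "e \<in> E" for e g
    using equivariant[of "(e, 0)" g] that by (simp add: cX_ra_def \<tau>_def k_def)
  have "bij_betw \<tau> E E'"
    unfolding bij_betw_def
  proof
    show "inj_on \<tau> E"
    proof (rule inj_onI)
      fix a b assume ab: "a \<in> E" "b \<in> E" "\<tau> a = \<tau> b"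
      then have "f (a, - k a) = f (b, - k b)"
        by (simp add: f_eq)
      then show "a = b"
        using bij ab unfolding bij_betw_def inj_on_def by blast
    qed
    show "\<tau> ` E = E'"
    proof
      have "f (e, 0) \<in> E' \<times> UNIV" if "e \<in> E" for e
        using bij_betw_apply[OF bij] that by simp
      then show "\<tau> ` E \<subseteq> E'"
        by (auto simp: \<tau>_def mem_Times_iff)
      show "E' \<subseteq> \<tau> ` E"
      proof
        fix e' assume "e' \<in> E'"
        then have "(e', 0) \<in> f ` (E \<times> UNIV)"
          using bij unfolding bij_betw_def by simp
        then obtain e g where "e \<in> E" "f (e, g) = (e', 0)"
          by auto
        then show "e' \<in> \<tau> ` E"
          by (metis f_eq fst_conv image_eqI)
      qed
    qed
  qed
  with f_eq show ?thesis
    using that by blast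
qed

lemma corr_iso_cX_imp_cohomologous:
  fixes act :: "'g::group_add \<Rightarrow> 'v \<Rightarrow> 'v" and E :: "'e set" and E' :: "'f set"
  assumes act0: "\<And>v. act 0 v = v"
    and act_add: "\<And>g h v. act (g + h) v = act g (act h v)"
    and Eact: "left_action Eact E"
    and iso: "corr_iso (cX_top E) (cX_la Eact phi) cX_ra (cX_r rE) (cX_s act sE)
                       (cX_top E') (cX_la Eact' phi') cX_ra (cX_r rE') (cX_s act sE') f"
  shows "\<exists>\<tau> (\<psi> :: 'e \<Rightarrow> 'g).
           bij_betw \<tau> E E' \<and>
           (\<forall>h. \<forall>e\<in>E. \<tau> (Eact h e) = Eact' h (\<tau> e)) \<and>
           (\<forall>e\<in>E. rE' (\<tau> e) = rE e) \<and>
           (\<forall>e\<in>E. sE' (\<tau> e) = act (- \<psi> e) (sE e)) \<and>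
           (\<forall>h. \<forall>e\<in>E. phi' h (\<tau> e) = - \<psi> (Eact h e) + phi h e + \<psi> e)"
proof -
  have bij: "bij_betw f (E \<times> UNIV) (E' \<times> UNIV)"
    and f_la: "\<And>h x. x \<in> E \<times> UNIV \<Longrightarrow> f (cX_la Eact phi h x) = cX_la Eact' phi' h (f x)"
    and f_ra: "\<And>g x. x \<in> E \<times> UNIV \<Longrightarrow> f (cX_ra x g) = cX_ra (f x) g"
    and f_r: "\<And>x. x \<in> E \<times> UNIV \<Longrightarrow> cX_r rE' (f x) = cX_r rE x"
    and f_s: "\<And>x. x \<in> E \<times> UNIV \<Longrightarrow> cX_s act sE' (f x) = cX_s act sE x"
    using iso unfolding corr_iso_def cX_top_def homeomorphic_map_discrete_topology_iff by auto
  obtain \<tau> k where "bij_betw \<tau> E E'" and f_eq: "\<And>e g. e \<in> E \<Longrightarrow> f (e, g) = (\<tau> e, k e + g)"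
    using cX_ra_equivariant_bij_betw[OF bij f_ra] by blast
  moreover have "\<tau> (Eact h e) = Eact' h (\<tau> e) \<and>
      phi' h (\<tau> e) = k (Eact h e) + phi h e + - k e" if e: "e \<in> E" for h e
  proof -
    have "Eact h e \<in> E"
      using Eact e unfolding left_action_def by blast
    then have "(\<tau> (Eact h e), k (Eact h e) + phi h e) = (Eact' h (\<tau> e), phi' h (\<tau> e) + k e)"
      using f_la[of "(e, 0)" h] e by (simp add: cX_la_def f_eq)
    then show ?thesis
      by (simp add: add.assoc eq_diff_eq)
  qed
  moreover have "rE' (\<tau> e) = rE e" if "e \<in> E" for e
    using f_r[of "(e, 0)"] that by (simp add: cX_r_def f_eq)
  moreover have "sE' (\<tau> e) = act (k e) (sE e)" if "e \<in> E" for e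
  proof -
    have "act (- k e) (sE' (\<tau> e)) = sE e"
      using f_s[of "(e, 0)"] that by (simp add: cX_s_def f_eq act0)
    then show ?thesis
      by (metis act0 act_add add.right_inverse)
  qed
  ultimately show ?thesis
    by (intro exI[of _ \<tau>] exI[of _ "\<lambda>e. - k e"]) simp
qed

lemma orbits_cX:
  "orbits (cX_top E) (cX_ra :: 'e \<times> 'g::group_add \<Rightarrow> 'g \<Rightarrow> 'e \<times> 'g) = (\<lambda>e. {e} \<times> UNIV) ` E"
proof -
  have orbit: "range (cX_ra x) = {fst x} \<times> (UNIV :: 'g set)" for x :: "'e \<times> 'g"
  proof
    show "range (cX_ra x) \<subseteq> {fst x} \<times> UNIV"
      by (auto simp: cX_ra_def)
    have "y = cX_ra x (- snd x + snd y)" if "y \<in> {fst x} \<times> UNIV" for y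
      using that by (auto simp: cX_ra_def add.assoc[symmetric])
    then show "{fst x} \<times> UNIV \<subseteq> range (cX_ra x)"
      by blast
  qed
  have "(\<lambda>x. range (cX_ra x)) ` (E \<times> (UNIV :: 'g set)) =
      (\<lambda>e. {e} \<times> UNIV) ` fst ` (E \<times> (UNIV :: 'g set))"
    unfolding orbit image_image by (rule refl)
  then show ?thesis
    by (simp add: orbits_def cX_top_def)
qed

lemma orbit_space_cX:
  "orbit_space (cX_top E) (cX_ra :: 'e \<times> 'g::group_add \<Rightarrow> 'g \<Rightarrow> 'e \<times> 'g) =
     discrete_topology ((\<lambda>e. {e} \<times> UNIV) ` E)"
proof -
  have "(\<lambda>U. U \<subseteq> (\<lambda>e. {e} \<times> UNIV) ` E \<and> openin (cX_top E) (\<Union>U)) =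
        (\<lambda>U. U \<subseteq> (\<lambda>e. {e} \<times> (UNIV :: 'g set)) ` E)"
    by (auto simp: cX_top_def fun_eq_iff)
  then show ?thesis
    unfolding orbit_space_def orbits_cX discrete_topology_def by simp
qed

lemma r_star_cX: "r_star (cX_r rE) ({e} \<times> (UNIV :: 'g set)) = rE e"
proof -
  have "(SOME x. x \<in> {e} \<times> (UNIV :: 'g set)) \<in> {e} \<times> UNIV"
    by (rule someI_ex) auto
  then show ?thesis
    by (auto simp: r_star_def cX_r_def)
qed

lemma proper_corr_cX_iff:
  "proper_corr (cX_top E) (cX_ra :: 'e \<times> 'g::group_add \<Rightarrow> 'g \<Rightarrow> 'e \<times> 'g) (cX_r rE)
     \<longleftrightarrow> (\<forall>v. finite {e \<in> E. rE e = v})"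
proof -
  let ?orbit = "\<lambda>e. {e} \<times> (UNIV :: 'g set)"
  have inj: "inj_on ?orbit A" for A
    by (auto simp: inj_on_def)
  have fibre: "{C \<in> ?orbit ` E. r_star (cX_r rE) C = v} = ?orbit ` {e \<in> E. rE e = v}" for v
    by (auto simp: r_star_cX)
  show ?thesis
    unfolding proper_corr_def orbit_space_cX proper_map_discrete_topology_iff fibre
    by (simp add: finite_image_iff[OF inj])
qed

lemma tight_corr_cX_iff:
  "tight_corr (cX_top E) (cX_ra :: 'e \<times> 'g::group_add \<Rightarrow> 'g \<Rightarrow> 'e \<times> 'g) (cX_r rE)
     \<longleftrightarrow> bij_betw rE E UNIV"
proof -
  let ?orbit = "\<lambda>e. {e} \<times> (UNIV :: 'g set)"
  have "bij_betw ?orbit E (?orbit ` E)"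
    by (auto simp: bij_betw_def inj_on_def)
  then have "bij_betw (r_star (cX_r rE)) (?orbit ` E) UNIV \<longleftrightarrow>
      bij_betw (r_star (cX_r rE) \<circ> ?orbit) E UNIV"
    by (rule bij_betw_comp_iff)
  also have "\<dots> \<longleftrightarrow> bij_betw rE E UNIV"
    by (rule bij_betw_cong) (simp add: r_star_cX)
  finally show ?thesis
    unfolding tight_corr_def orbit_space_cX homeomorphic_map_discrete_topology_iff .
qed

theorem proposition4p3:
  fixes act :: "'g::group_add \<Rightarrow> 'v \<Rightarrow> 'v"
  assumes act0: "\<And>v. act 0 v = v"
    and act_add: "\<And>g h v. act (g + h) v = act g (act h v)"
  shows
    "(\<forall>(E :: 'e set) Eact phi rE sE. cocycle_data act E Eact phi rE sE \<longrightarrow>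
        is_corr act (cX_top E) (cX_la Eact phi) cX_ra (cX_r rE) (cX_s act sE))
   \<and> (\<forall>(X :: 'x topology) la ra rX sX. is_corr act X la ra rX sX \<longrightarrow>
        (\<exists>(E :: 'x set) Eact phi rE sE f.
           cocycle_data act E Eact phi rE sE \<and>
           corr_iso X la ra rX sX
             (cX_top E) (cX_la Eact phi) cX_ra (cX_r rE) (cX_s act sE) f))
   \<and> (\<forall>(E :: 'e set) Eact phi rE sE (E' :: 'f set) Eact' phi' rE' sE'.
        cocycle_data act E Eact phi rE sE \<and> cocycle_data act E' Eact' phi' rE' sE' \<and>
        (\<exists>f. corr_iso (cX_top E) (cX_la Eact phi) cX_ra (cX_r rE) (cX_s act sE)
                       (cX_top E') (cX_la Eact' phi') cX_ra (cX_r rE') (cX_s act sE') f)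
        \<longrightarrow> (\<exists>\<tau> (\<psi> :: 'e \<Rightarrow> 'g).
               bij_betw \<tau> E E' \<and>
               (\<forall>h. \<forall>e\<in>E. \<tau> (Eact h e) = Eact' h (\<tau> e)) \<and>
               (\<forall>e\<in>E. rE' (\<tau> e) = rE e) \<and>
               (\<forall>e\<in>E. sE' (\<tau> e) = act (- \<psi> e) (sE e)) \<and>
               (\<forall>h. \<forall>e\<in>E. phi' h (\<tau> e) = - \<psi> (Eact h e) + phi h e + \<psi> e)))
   \<and> (\<forall>(E :: 'e set) Eact phi rE sE. cocycle_data act E Eact phi rE sE \<longrightarrow>
        (proper_corr (cX_top E) (cX_ra :: 'e \<times> 'g \<Rightarrow> 'g \<Rightarrow> 'e \<times> 'g) (cX_r rE)
           \<longleftrightarrow> (\<forall>v. finite {e \<in> E. rE e = v})))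
   \<and> (\<forall>(E :: 'e set) Eact phi rE sE. cocycle_data act E Eact phi rE sE \<longrightarrow>
        (tight_corr (cX_top E) (cX_ra :: 'e \<times> 'g \<Rightarrow> 'g \<Rightarrow> 'e \<times> 'g) (cX_r rE)
           \<longleftrightarrow> bij_betw rE E UNIV))"
  by (intro conjI allI impI; (elim conjE exE)?;
      (rule is_corr_cX[OF act_add] is_corr_iso_cX[OF act0 act_add]
        corr_iso_cX_imp_cohomologous[OF act0 act_add])?)
    (simp_all add: cocycle_data_def proper_corr_cX_iff tight_corr_cX_iff)

end
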